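(* Let $n$, $k$ and $r$ be integers such that $1<r<k<n$. Then \[ \lfloor (rn-1)/k\rfloor-1 \leq \sigma(n,k,r)\leq \lfloor (rn-1)/k\rfloor, \] where $\sigma(n,k,r)$ denotes the largest integer $s\in[0,n]$ such that there exists an $(s,k,r)$-clash-free permutation of $\mathbb{Z}_n$.
   Context: For integers $u\leq v$, $[u,v]$ denotes the set of integers $i$ with $u\leq i\leq v$. For a subset $X\subseteq\mathbb{Z}_n$, define $||X||_n=\min\{t\in\mathbb{Z}\mid X\subseteq x+[0,t]\bmod n \text{ for some } x\in\mathbb{Z}_n\}$ (the minimum length of a cyclic interval containing $X$). For a permutation $\pi$ of $\mathbb{Z}_n$ and positive integers $s,k,r$, an $(s,k,r)$-clash is a subset $X\subseteq\mathbb{Z}_n$ of cardinality $r+1$ such that $||X||_n<s$ and $||\pi(X)||_n<k$. The permutation $\pi$ is $(s,k,r)$-clash-free if it has no $(s,k,r)$-clashes. *)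

theory Defs
  imports Complex_Main
begin

text \<open>Z_n is modelled as {..<n} with arithmetic mod n.
  The cyclic width ||X||_n: least t such that X is contained in a cyclic
  interval x + [0,t] mod n for some x in Z_n.\<close>
definition cyc_width :: "nat \<Rightarrow> nat set \<Rightarrow> nat" where
  "cyc_width n X = (LEAST t. \<exists>x<n. X \<subseteq> {(x + i) mod n | i. i \<le> t})"

definition is_clash :: "nat \<Rightarrow> (nat \<Rightarrow> nat) \<Rightarrow> nat \<Rightarrow> nat \<Rightarrow> nat \<Rightarrow> nat set \<Rightarrow> bool" where
  "is_clash n \<pi> s k r X \<longleftrightarrow>
     X \<subseteq> {..<n} \<and> card X = r + 1 \<and> cyc_width n X < s \<and> cyc_width n (\<pi> ` X) < k"

definition clash_free :: "nat \<Rightarrow> (nat \<Rightarrow> nat) \<Rightarrow> nat \<Rightarrow> nat \<Rightarrow> nat \<Rightarrow> bool" where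
  "clash_free n \<pi> s k r \<longleftrightarrow> \<not> (\<exists>X. is_clash n \<pi> s k r X)"

definition sigma :: "nat \<Rightarrow> nat \<Rightarrow> nat \<Rightarrow> nat" where
  "sigma n k r = (GREATEST s. s \<le> n \<and> (\<exists>\<pi>. bij_betw \<pi> {..<n} {..<n} \<and> clash_free n \<pi> s k r))"

end

theory Submission
  imports Defs "HOL-Number_Theory.Cong"
begin

text \<open>Upper bound: if \<open>\<pi>\<close> is \<open>(s,k,r)\<close>-clash-free, every cyclic \<open>s\<close>-window of the domain meets
  the preimage of a cyclic \<open>k\<close>-window in at most \<open>r\<close> points; double counting over the \<open>n\<close>
  windows gives \<open>s k \<le> r n\<close>, and equality is ruled out by a periodicity argument.

  Lower bound: for \<open>c = (r n - 1) div k\<close> let \<open>\<sigma> j = j c mod n\<close>, corrected by offsets below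
  \<open>gcd c n\<close> to make it a bijection. Lifted to the integers, \<open>\<sigma>\<close> grows by at least \<open>c - 1\<close> per
  step and by at most \<open>h c + gcd c n - 1\<close> over \<open>h\<close> steps. If \<open>r + 1\<close> points of a \<open>k\<close>-window
  had images in one \<open>(c - 1)\<close>-window modulo \<open>n\<close>, their lifts would lie in \<open>r + 1\<close> distinct
  periods of length \<open>n\<close>, forcing a span beyond \<open>k c + gcd c n \<le> r n\<close>. So \<open>\<sigma>\<close> has no
  \<open>(k, c - 1, r)\<close>-clash, and its inverse has no \<open>(c - 1, k, r)\<close>-clash.\<close>

section \<open>Cyclic windows\<close>

definition cyc_window :: "nat \<Rightarrow> nat \<Rightarrow> nat \<Rightarrow> nat set" where
  "cyc_window n x t = (\<lambda>i. (x + i) mod n) ` {..<t}"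

lemma inj_on_add_mod: "inj_on (\<lambda>i. (x + i) mod n) {..<n::nat}"
proof (rule inj_onI)
  fix i j assume "i \<in> {..<n}" "j \<in> {..<n}" "(x + i) mod n = (x + j) mod n"
  then show "i = j"
    by (metis cong_add_lcancel_nat cong_def lessThan_iff mod_less)
qed

lemma bij_betw_add_mod: "bij_betw (\<lambda>i. (x + i) mod n) {..<n} {..<n::nat}"
proof (cases "n = 0")
  case False
  then show ?thesis
    using inj_on_add_mod by (intro bij_betw_imageI endo_inj_surj) auto
qed simp

lemma card_cyc_window: "t \<le> n \<Longrightarrow> card (cyc_window n x t) = t"
  unfolding cyc_window_def
  by (subst card_image) (auto intro: inj_on_subset[OF inj_on_add_mod])

lemma cyc_window_subset: "0 < n \<Longrightarrow> cyc_window n x t \<subseteq> {..<n}"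
  unfolding cyc_window_def by auto

lemma cyc_window_diff_Suc:
  assumes "0 < k" "k < n"
  shows "cyc_window n x k - cyc_window n (Suc x) k = {x mod n}"
proof
  show "cyc_window n x k - cyc_window n (Suc x) k \<subseteq> {x mod n}"
  proof
    fix z assume z: "z \<in> cyc_window n x k - cyc_window n (Suc x) k"
    then obtain i where "i < k" "z = (x + i) mod n"
      unfolding cyc_window_def by blast
    moreover have "i = 0"
    proof (rule ccontr)
      assume "i \<noteq> 0"
      then have "z = (Suc x + (i - 1)) mod n" "i - 1 < k"
        using \<open>z = _\<close> \<open>i < k\<close> by simp_all
      then show False
        using z unfolding cyc_window_def by blast
    qed
    ultimately show "z \<in> {x mod n}" by simp
  qed
  have "x mod n \<noteq> (Suc x + i) mod n" if "i < k" for i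
  proof
    assume "x mod n = (Suc x + i) mod n"
    then have "[x + 0 = x + Suc i] (mod n)"
      by (simp add: cong_def)
    then have "n dvd Suc i"
      by (metis cong_add_lcancel_nat cong_dvd_iff dvd_0_right)
    then show False
      using that assms by (auto dest: dvd_imp_le)
  qed
  then show "{x mod n} \<subseteq> cyc_window n x k - cyc_window n (Suc x) k"
    using assms(1) unfolding cyc_window_def by force
qed

lemma mod_shift_less_of_cyc_window:
  assumes "x < n" "z mod n \<in> cyc_window n x s"
  shows "(z + (n - x)) mod n < s"
proof -
  obtain p where p: "p < s" "z mod n = (x + p) mod n"
    using assms(2) unfolding cyc_window_def by blast
  have "(z + (n - x)) mod n = (z mod n + (n - x)) mod n"
    by (simp add: mod_add_left_eq)
  also have "\<dots> = (x + p + (n - x)) mod n"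
    unfolding p(2) by (rule mod_add_left_eq)
  also have "x + p + (n - x) = p + n"
    using assms(1) by simp
  also have "(p + n) mod n \<le> p"
    by (simp add: mod_less_eq_dividend)
  finally show ?thesis
    using p(1) by simp
qed

lemma cyc_width_less_iff:
  assumes "0 < n" "X \<subseteq> {..<n}" "X \<noteq> {}"
  shows "cyc_width n X < s \<longleftrightarrow> (\<exists>x<n. X \<subseteq> cyc_window n x s)"
proof
  assume "cyc_width n X < s"
  moreover have "\<exists>x<n. X \<subseteq> {(x + i) mod n | i. i \<le> cyc_width n X}"
    unfolding cyc_width_def
  proof (rule LeastI[of _ "n - 1"])
    have "X \<subseteq> {(0 + i) mod n | i. i \<le> n - 1}"
    proof
      fix a assume "a \<in> X"
      then have "a < n" using assms(2) by blast
      then show "a \<in> {(0 + i) mod n | i. i \<le> n - 1}" by (intro CollectI exI[of _ a]) simp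
    qed
    then show "\<exists>x<n. X \<subseteq> {(x + i) mod n | i. i \<le> n - 1}"
      using assms(1) by blast
  qed
  ultimately show "\<exists>x<n. X \<subseteq> cyc_window n x s"
    unfolding cyc_window_def by fastforce
next
  assume "\<exists>x<n. X \<subseteq> cyc_window n x s"
  then obtain x where "x < n" "X \<subseteq> {(x + i) mod n | i. i \<le> s - 1}" "0 < s"
    using assms(3) unfolding cyc_window_def by fastforce
  then have "cyc_width n X \<le> s - 1"
    unfolding cyc_width_def by (intro Least_le) blast
  then show "cyc_width n X < s"
    using \<open>0 < s\<close> by linarith
qed

lemma is_clash_iff:
  assumes "0 < n" "\<pi> ` {..<n} \<subseteq> {..<n}"
  shows "is_clash n \<pi> s k r X \<longleftrightarrow> X \<subseteq> {..<n} \<and> card X = r + 1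
    \<and> (\<exists>x<n. X \<subseteq> cyc_window n x s) \<and> (\<exists>y<n. \<pi> ` X \<subseteq> cyc_window n y k)"
proof -
  have "X \<noteq> {}" if "card X = r + 1"
    using that by auto
  moreover have "\<pi> ` X \<subseteq> {..<n}" if "X \<subseteq> {..<n}"
    using that assms(2) by blast
  ultimately show ?thesis
    unfolding is_clash_def using cyc_width_less_iff[OF assms(1)] by blast
qed

section \<open>The upper bound\<close>

definition window_count :: "nat \<Rightarrow> nat set \<Rightarrow> nat \<Rightarrow> nat \<Rightarrow> nat" where
  "window_count n Q s x = (\<Sum>i<s. of_bool ((x + i) mod n \<in> Q))"

lemma window_count_mod: "window_count n Q s (x mod n) = window_count n Q s x"
  unfolding window_count_def by (simp add: mod_add_left_eq)

lemma window_count_Suc: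
  "window_count n Q s (Suc x) + of_bool (x mod n \<in> Q)
     = window_count n Q s x + of_bool ((x + s) mod n \<in> Q)"
proof -
  let ?f = "\<lambda>i. of_bool ((x + i) mod n \<in> Q) :: nat"
  have "?f 0 + (\<Sum>i<s. ?f (Suc i)) = (\<Sum>i<s. ?f i) + ?f s"
    using sum.lessThan_Suc_shift[of ?f s] sum.lessThan_Suc[of ?f s] by (rule trans[OF sym])
  then show ?thesis
    unfolding window_count_def by (simp only: add_Suc add_Suc_right add_0_right add_0 ac_simps)
qed

lemma window_count_eq_card:
  assumes "s \<le> n"
  shows "window_count n Q s x = card (Q \<inter> cyc_window n x s)"
proof -
  have "window_count n Q s x = card {i\<in>{..<s}. (x + i) mod n \<in> Q}"
    unfolding window_count_def by (simp add: Int_def)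
  also have "\<dots> = card ((\<lambda>i. (x + i) mod n) ` {i\<in>{..<s}. (x + i) mod n \<in> Q})"
    using assms by (intro card_image[symmetric] inj_on_subset[OF inj_on_add_mod]) auto
  also have "(\<lambda>i. (x + i) mod n) ` {i\<in>{..<s}. (x + i) mod n \<in> Q} = Q \<inter> cyc_window n x s"
    unfolding cyc_window_def by auto
  finally show ?thesis .
qed

text \<open>Double counting: every point of \<open>Q\<close> lies in exactly \<open>s\<close> of the \<open>n\<close> windows.\<close>
lemma sum_window_count:
  assumes "Q \<subseteq> {..<n}"
  shows "(\<Sum>x<n. window_count n Q s x) = s * card Q"
proof -
  have "(\<Sum>x<n. of_bool ((x + i) mod n \<in> Q)) = card Q" for i
  proof -
    have "(\<Sum>x<n. of_bool ((i + x) mod n \<in> Q)) = (\<Sum>x<n. of_bool (x \<in> Q))"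
      by (rule sum.reindex_bij_betw[OF bij_betw_add_mod])
    then have "(\<Sum>x<n. of_bool ((x + i) mod n \<in> Q)) = (\<Sum>x<n. of_bool (x \<in> Q))"
      by (simp only: add.commute)
    also have "\<dots> = card Q"
      using assms by (simp add: Int_absorb1)
    finally show ?thesis .
  qed
  then show ?thesis
    unfolding window_count_def by (subst sum.swap) simp
qed

lemma window_count_periodic:
  assumes Q: "Q \<subseteq> {..<n}"
    and le: "\<And>x. x < n \<Longrightarrow> window_count n Q s x \<le> r"
    and total: "n * r \<le> s * card Q"
  shows "(x + s) mod n \<in> Q \<longleftrightarrow> x mod n \<in> Q"
proof (cases "n = 0")
  case True
  then show ?thesis using Q by simp
next
  case False
  have sum_eq: "(\<Sum>x<n. window_count n Q s x) = (\<Sum>x<n. r)"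
  proof (rule antisym)
    show "(\<Sum>x<n. window_count n Q s x) \<le> (\<Sum>x<n. r)"
      using le by (intro sum_mono) simp
    show "(\<Sum>x<n. r) \<le> (\<Sum>x<n. window_count n Q s x)"
      using total sum_window_count[OF Q] by simp
  qed
  then have "window_count n Q s x = r" if "x < n" for x
    using sum_mono_inv[OF sum_eq, of x] le that by simp
  then have "window_count n Q s x = r" for x
    using False window_count_mod[of n Q s x] by (metis mod_less_divisor neq0_conv)
  then show ?thesis
    using window_count_Suc[of n Q s x] by (simp add: of_bool_eq_iff eq_commute)
qed

lemma clash_free_card_window_le:
  assumes cf: "clash_free n \<pi> s k r" and "0 < n" "\<pi> ` {..<n} \<subseteq> {..<n}"
    and "x < n" "y < n" "\<pi> ` Q \<subseteq> cyc_window n y k"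
  shows "card (Q \<inter> cyc_window n x s) \<le> r"
proof (rule ccontr)
  assume "\<not> ?thesis"
  then obtain X where X: "X \<subseteq> Q \<inter> cyc_window n x s" "card X = r + 1"
    by (metis Suc_eq_plus1 not_less_eq_eq obtain_subset_with_card_n)
  have "is_clash n \<pi> s k r X"
    unfolding is_clash_iff[OF assms(2,3)]
    using X assms(4-6) cyc_window_subset[OF assms(2)] by blast
  with cf show False
    unfolding clash_free_def by blast
qed

lemma card_preimage_cyc_window:
  assumes bij: "bij_betw \<pi> {..<n} {..<n}" and "t \<le> n"
  shows "card {a \<in> {..<n}. \<pi> a \<in> cyc_window n y t} = t"
proof (cases "n = 0")
  case False
  have "cyc_window n y t \<subseteq> \<pi> ` {..<n}"
    using cyc_window_subset[of n y t] False bij_betw_imp_surj_on[OF bij] by simp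
  then have "\<pi> ` {a \<in> {..<n}. \<pi> a \<in> cyc_window n y t} = cyc_window n y t"
    by blast
  moreover have "inj_on \<pi> {a \<in> {..<n}. \<pi> a \<in> cyc_window n y t}"
    using bij_betw_imp_inj_on[OF bij] by (rule inj_on_subset) blast
  ultimately show ?thesis
    using card_cyc_window[OF \<open>t \<le> n\<close>] by (metis card_image)
qed (use assms in simp)

text \<open>If \<open>s k \<ge> r n\<close>, the preimages of all \<open>k\<close>-windows are invariant under the shift by \<open>s\<close>.
  The preimages of \<open>[0, k)\<close> and \<open>[1, k]\<close> differ exactly in the preimage of \<open>0\<close>, so \<open>s\<close>
  would be a multiple of \<open>n\<close>.\<close>
lemma clash_free_upper_bound:
  assumes bij: "bij_betw \<pi> {..<n} {..<n}" and cf: "clash_free n \<pi> s k r"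
    and "s \<le> n" "0 < r" "r < k" "k < n"
  shows "s * k < r * n"
proof (rule ccontr)
  assume "\<not> s * k < r * n"
  then have total: "n * r \<le> s * k" by (simp add: mult.commute)
  have "0 < n" using assms by simp
  then have "0 < s" using total \<open>0 < r\<close> by (cases s) auto
  have into: "\<pi> ` {..<n} \<subseteq> {..<n}" and inj: "inj_on \<pi> {..<n}"
    using bij unfolding bij_betw_def by simp_all
  define Q where "Q y = {a \<in> {..<n}. \<pi> a \<in> cyc_window n y k}" for y
  have Q_sub: "Q y \<subseteq> {..<n}" and card_Q: "card (Q y) = k" for y
    unfolding Q_def using card_preimage_cyc_window[OF bij] \<open>k < n\<close> by auto
  have count_le: "window_count n (Q y) s x \<le> r" if "x < n" "y < n" for x y
    unfolding window_count_eq_card[OF \<open>s \<le> n\<close>]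
    by (rule clash_free_card_window_le[OF cf \<open>0 < n\<close> into that]) (auto simp: Q_def)
  have "s \<noteq> n"
  proof
    assume "s = n"
    have "cyc_window n 0 n = {..<n}"
      unfolding cyc_window_def by auto
    then have "window_count n (Q 0) s 0 = k"
      using Q_sub card_Q \<open>s = n\<close> window_count_eq_card[of s n] by (simp add: Int_absorb2)
    then show False
      using count_le[of 0 0] \<open>0 < n\<close> \<open>r < k\<close> by simp
  qed
  have periodic: "(a + s) mod n \<in> Q y \<longleftrightarrow> a mod n \<in> Q y" if "y < n" for a y
    using window_count_periodic[OF Q_sub count_le] total card_Q that by simp
  obtain a where a: "a < n" "\<pi> a = 0"
    using bij_betw_imp_surj_on[OF bij] \<open>0 < n\<close> by (metis imageE lessThan_iff)
  have "\<pi> a \<in> cyc_window n 0 k - cyc_window n 1 k"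
    using cyc_window_diff_Suc[of k n 0] assms a by simp
  then have "a \<in> Q 0 - Q 1"
    using a unfolding Q_def by simp
  then have "(a + s) mod n \<in> Q 0 - Q 1"
    using periodic[of 0 a] periodic[of 1 a] a assms(4-6) by simp
  then have "\<pi> ((a + s) mod n) \<in> cyc_window n 0 k - cyc_window n 1 k"
    unfolding Q_def by simp
  then have "\<pi> ((a + s) mod n) = \<pi> a"
    using cyc_window_diff_Suc[of k n 0] assms a by simp
  then have "(a + s) mod n = a mod n"
    using inj_onD[OF inj] a \<open>0 < n\<close> by simp
  then have "s mod n = 0"
    by (metis add_0_right cong_add_lcancel_0_nat cong_def mod_0)
  then show False
    using \<open>0 < s\<close> \<open>s \<le> n\<close> \<open>s \<noteq> n\<close> by simp
qed

section \<open>The lower bound\<close>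

lemma clash_free_the_inv_into:
  assumes bij: "bij_betw \<sigma> {..<n} {..<n}" and cf: "clash_free n \<sigma> k s r"
  shows "clash_free n (the_inv_into {..<n} \<sigma>) s k r"
  unfolding clash_free_def
proof
  let ?\<pi> = "the_inv_into {..<n} \<sigma>"
  assume "\<exists>X. is_clash n ?\<pi> s k r X"
  then obtain X where X: "is_clash n ?\<pi> s k r X" by blast
  have bij_inv: "bij_betw ?\<pi> {..<n} {..<n}"
    using bij by (rule bij_betw_the_inv_into)
  have "X \<subseteq> {..<n}"
    using X unfolding is_clash_def by blast
  then have "\<sigma> ` (?\<pi> ` X) = X" "?\<pi> ` X \<subseteq> {..<n}" "card (?\<pi> ` X) = card X"
    using f_the_inv_into_f_bij_betw[OF bij] bij_betw_imp_surj_on[OF bij_inv]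
      card_image[OF inj_on_subset[OF bij_betw_imp_inj_on[OF bij_inv]]]
    by (force simp: image_image)+
  then have "is_clash n \<sigma> k s r (?\<pi> ` X)"
    using X unfolding is_clash_def by simp
  with cf show False
    unfolding clash_free_def by blast
qed

lemma spread_of_spaced_small_residues:
  fixes Z :: "nat \<Rightarrow> nat"
  assumes I: "finite I" "r < card I"
    and gap: "\<And>i j. i \<in> I \<Longrightarrow> j \<in> I \<Longrightarrow> i < j \<Longrightarrow> Z i + s \<le> Z j"
    and res: "\<And>i. i \<in> I \<Longrightarrow> Z i mod n < s"
  shows "n * r + Z (Min I) < Z (Max I) + s"
proof -
  have "I \<noteq> {}" using I by auto
  have between: "Z (Min I) \<le> Z i" "Z i \<le> Z (Max I)" if "i \<in> I" for i
    using gap[of "Min I" i] gap[of i "Max I"] that I \<open>I \<noteq> {}\<close>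
    by (metis Min_in Max_in Min_le Max_ge le_add1 order.order_iff_strict order.trans)+
  have "Z i div n \<noteq> Z j div n" if "i \<in> I" "j \<in> I" "i < j" for i j
  proof
    assume same: "Z i div n = Z j div n"
    have "Z j = n * (Z j div n) + Z j mod n" by (rule mult_div_mod_eq[symmetric])
    also have "\<dots> < n * (Z i div n) + s" using res[OF that(2)] unfolding same by linarith
    also have "\<dots> \<le> Z i + s" by (simp add: mult_div_mod_eq[of n "Z i", symmetric, simplified])
    also have "\<dots> \<le> Z j" using gap[OF that] .
    finally show False by simp
  qed
  then have "inj_on (\<lambda>i. Z i div n) I"
    by (rule linorder_inj_onI') blast
  then have "card I = card ((\<lambda>i. Z i div n) ` I)"
    by (simp add: card_image)
  also have "\<dots> \<le> card {Z (Min I) div n .. Z (Max I) div n}"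
    using between by (intro card_mono) (auto intro!: div_le_mono)
  finally have "Z (Min I) div n + r \<le> Z (Max I) div n"
    using I by simp
  then have "n * (Z (Min I) div n) + n * r \<le> n * (Z (Max I) div n)"
    by (metis add_mult_distrib2 mult_le_mono2)
  moreover have "n * (Z (Max I) div n) \<le> Z (Max I)"
    by (simp add: mult_div_mod_eq[of n, symmetric, simplified])
  moreover have "Z (Min I) < n * (Z (Min I) div n) + s"
    using res[OF Min_in[OF I(1) \<open>I \<noteq> {}\<close>]] mult_div_mod_eq[of n "Z (Min I)"] by linarith
  ultimately show ?thesis by linarith
qed

lemma inj_on_mult_mod: "inj_on (\<lambda>u. u * c mod n) {..<n div gcd c n :: nat}"
proof (rule inj_onI)
  fix u v assume u: "u \<in> {..<n div gcd c n}" and v: "v \<in> {..<n div gcd c n}"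
    and eq: "u * c mod n = v * c mod n"
  define G where "G = gcd c n"
  define m where "m = n div G"
  define c' where "c' = c div G"
  have "0 < m" using u unfolding m_def G_def by simp
  then have "0 < G" unfolding m_def by (cases G) auto
  have n: "n = m * G" and c: "c = c' * G"
    unfolding m_def c'_def G_def by simp_all
  have "coprime c' m"
    unfolding c'_def m_def G_def using \<open>0 < G\<close> G_def by (intro div_gcd_coprime) auto
  have "(u * c' mod m) * G = (v * c' mod m) * G"
    using eq by (simp add: n c mult.assoc[symmetric] mod_mult_mult2)
  then have "[u * c' = v * c'] (mod m)"
    using \<open>0 < G\<close> by (simp add: cong_def)
  then have "[u = v] (mod m)"
    using cong_mult_rcancel_nat[OF \<open>coprime c' m\<close>] by simp
  then show "u = v"
    using u v cong_less_modulus_unique_nat unfolding m_def G_def by auto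
qed

text \<open>With \<open>G = gcd c n\<close> and \<open>m = n div G\<close>, the map \<open>j \<mapsto> j c mod n\<close> runs through the
  multiples of \<open>G\<close> on each of the \<open>G\<close> blocks of \<open>m\<close> consecutive \<open>j < n\<close>; the offset
  \<open>G - 1 - j div m\<close> sends block \<open>t\<close> to the residue class \<open>G - 1 - t\<close> modulo \<open>G\<close>. The offsets
  decrease along \<open>[0, n)\<close> and jump up only at multiples of \<open>n\<close>, so consecutive lifts differ by
  at least \<open>c - 1\<close>.\<close>
definition stride_lift :: "nat \<Rightarrow> nat \<Rightarrow> nat \<Rightarrow> nat" where
  "stride_lift n c j = j * c + (gcd c n - 1 - j mod n div (n div gcd c n))"

definition stride_perm :: "nat \<Rightarrow> nat \<Rightarrow> nat \<Rightarrow> nat" where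
  "stride_perm n c j = stride_lift n c j mod n"

lemma stride_perm_mod: "stride_perm n c (j mod n) = stride_perm n c j"
  unfolding stride_perm_def stride_lift_def by (metis mod_add_left_eq mod_mod_trivial mod_mult_left_eq)

lemma div_div_gcd_less:
  fixes j n c :: nat
  assumes "j < n"
  shows "j div (n div gcd c n) < gcd c n"
  using assms by (metis dvd_mult_div_cancel gcd_dvd2 less_mult_imp_div_less)

lemma stride_perm_mod_gcd:
  fixes c n j :: nat
  assumes "j < n"
  defines "G \<equiv> gcd c n" and "m \<equiv> n div gcd c n"
  shows "stride_perm n c j mod G = G - 1 - j div m"
proof -
  have "G dvd n" "G dvd c"
    unfolding G_def by simp_all
  then have "stride_perm n c j mod G = (j * c + (G - 1 - j div m)) mod G"
    using assms(1) unfolding stride_perm_def stride_lift_def G_def m_def by (simp add: mod_mod_cancel)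
  also have "\<dots> = G - 1 - j div m"
    using \<open>G dvd c\<close> assms(1) unfolding G_def by (auto simp: mod_add_left_eq[symmetric])
  finally show ?thesis .
qed

lemma stride_perm_eq:
  fixes c n j :: nat
  assumes "j < n"
  defines "G \<equiv> gcd c n" and "m \<equiv> n div gcd c n"
  shows "stride_perm n c j = (j mod m * c + (G - 1 - j div m)) mod n"
proof -
  obtain c' where c: "c = G * c'"
    unfolding G_def by (meson gcd_dvd1 dvdE)
  have n: "n = m * G"
    unfolding m_def G_def by simp
  have "j * c = (j mod m + j div m * m) * c"
    by simp
  also have "\<dots> = j mod m * c + j div m * c' * n"
    unfolding c n by (simp only: distrib_left distrib_right ac_simps)
  finally have jc: "j * c = j mod m * c + j div m * c' * n" .
  have "stride_perm n c j = (j * c + (G - 1 - j div m)) mod n"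
    using assms(1) unfolding stride_perm_def stride_lift_def G_def m_def by simp
  also have "j * c + (G - 1 - j div m) = (j mod m * c + (G - 1 - j div m)) + j div m * c' * n"
    unfolding jc by simp
  also have "(j mod m * c + (G - 1 - j div m) + j div m * c' * n) mod n
      = (j mod m * c + (G - 1 - j div m)) mod n"
    by (rule mod_mult_self1)
  finally show ?thesis .
qed

text \<open>The residue modulo \<open>gcd c n\<close> recovers the block \<open>j div m\<close>; inside a block, \<open>j mod m\<close> is
  recovered because \<open>c\<close> has order \<open>m\<close> modulo \<open>n\<close>.\<close>
lemma inj_on_stride_perm: "inj_on (stride_perm n c) {..<n}"
proof (rule inj_onI)
  fix i j assume i: "i \<in> {..<n}" and j: "j \<in> {..<n}" and eq: "stride_perm n c i = stride_perm n c j"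
  define m where "m = n div gcd c n"
  have "0 < m"
    using i unfolding m_def by (simp add: div_greater_zero_iff)
  have same_block: "i div m = j div m"
    using stride_perm_mod_gcd[of i n c] stride_perm_mod_gcd[of j n c]
      div_div_gcd_less[of i n c] div_div_gcd_less[of j n c] eq i j
    unfolding m_def by simp
  then have "[j mod m * c = i mod m * c] (mod n)"
    using eq stride_perm_eq[of i n c] stride_perm_eq[of j n c] i j
    unfolding m_def by (simp add: cong_def[symmetric] cong_add_rcancel_nat)
  then have "j mod m = i mod m"
    using inj_onD[OF inj_on_mult_mod, of "j mod m" c n "i mod m"] \<open>0 < m\<close>
    unfolding cong_def m_def by simp
  with same_block show "i = j"
    by (metis div_mult_mod_eq)
qed

lemma bij_betw_stride_perm: "bij_betw (stride_perm n c) {..<n} {..<n}"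
proof (cases "n = 0")
  case False
  then show ?thesis
    using inj_on_stride_perm
    by (intro bij_betw_imageI endo_inj_surj) (auto simp: stride_perm_def)
qed (simp add: bij_betw_def)

lemma stride_lift_Suc:
  assumes "0 < c" "0 < n"
  shows "stride_lift n c j + (c - 1) \<le> stride_lift n c (Suc j)"
proof -
  define G where "G = gcd c n"
  define m where "m = n div G"
  have block: "l div m < G" if "l < n" for l
    using div_div_gcd_less[OF that] unfolding m_def G_def .
  have "G - 1 - j mod n div m \<le> G - 1 - Suc j mod n div m + 1"
  proof (cases "Suc (j mod n) = n")
    case True
    then show ?thesis by (simp add: mod_Suc)
  next
    case False
    then have "Suc j mod n = Suc (j mod n)" "Suc (j mod n) < n"
      using mod_less_divisor[OF \<open>0 < n\<close>, of j] by (simp_all add: mod_Suc)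
    then show ?thesis
      using block[of "Suc (j mod n)"] div_Suc[of "j mod n" m] by (auto split: if_splits)
  qed
  then show ?thesis
    using \<open>0 < c\<close> unfolding stride_lift_def G_def m_def by simp
qed

lemma stride_lift_gap:
  assumes "0 < c" "0 < n" "i < j"
  shows "stride_lift n c i + (c - 1) \<le> stride_lift n c j"
  using assms(3)
proof (induction j)
  case (Suc j)
  then show ?case
    using stride_lift_Suc[OF assms(1,2), of i] stride_lift_Suc[OF assms(1,2), of j]
    by (auto simp: less_Suc_eq)
qed simp

lemma stride_lift_add_le: "stride_lift n c (j + h) \<le> stride_lift n c j + h * c + (gcd c n - 1)"
  unfolding stride_lift_def by (simp add: add_mult_distrib)

lemma clash_free_stride_perm:
  assumes "0 < c" and budget: "k * c + gcd c n \<le> r * n"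
  shows "clash_free n (stride_perm n c) k (c - 1) r"
proof -
  have "0 < n"
    using assms by (cases n) auto
  have into: "stride_perm n c ` {..<n} \<subseteq> {..<n}"
    using \<open>0 < n\<close> unfolding stride_perm_def by auto
  show ?thesis
    unfolding clash_free_def is_clash_iff[OF \<open>0 < n\<close> into]
  proof (intro notI)
    assume "\<exists>Y. Y \<subseteq> {..<n} \<and> card Y = r + 1 \<and> (\<exists>y<n. Y \<subseteq> cyc_window n y k)
      \<and> (\<exists>x<n. stride_perm n c ` Y \<subseteq> cyc_window n x (c - 1))"
    then obtain Y y x where Y: "card Y = r + 1" "y < n" "Y \<subseteq> cyc_window n y k"
      and x: "x < n" "stride_perm n c ` Y \<subseteq> cyc_window n x (c - 1)"
      by blast
    define I where "I = {i \<in> {..<k}. (y + i) mod n \<in> Y}"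
    have "finite I" unfolding I_def by simp
    have "Y = (\<lambda>i. (y + i) mod n) ` I"
      using Y(3) unfolding I_def cyc_window_def by auto
    then have "r < card I"
      using Y(1) card_image_le[OF \<open>finite I\<close>, of "\<lambda>i. (y + i) mod n"] by simp
    define Z where "Z i = stride_lift n c (y + i) + (n - x)" for i
    have res: "Z i mod n < c - 1" if "i \<in> I" for i
    proof -
      have "stride_perm n c ((y + i) mod n) \<in> cyc_window n x (c - 1)"
        using that x(2) unfolding I_def by blast
      then have "stride_lift n c (y + i) mod n \<in> cyc_window n x (c - 1)"
        unfolding stride_perm_mod by (simp add: stride_perm_def)
      then show ?thesis
        unfolding Z_def by (rule mod_shift_less_of_cyc_window[OF x(1)])
    qed
    have gap: "Z i + (c - 1) \<le> Z j" if "i < j" for i j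
      using stride_lift_gap[OF \<open>0 < c\<close> \<open>0 < n\<close>, of "y + i" "y + j"] that unfolding Z_def by simp
    have spread: "n * r + Z (Min I) < Z (Max I) + (c - 1)"
      using spread_of_spaced_small_residues[OF \<open>finite I\<close> \<open>r < card I\<close>] gap res by blast
    have "I \<noteq> {}" using \<open>r < card I\<close> by auto
    then have "Min I \<le> Max I" "Max I < k"
      using \<open>finite I\<close> Max_in[of I] unfolding I_def by auto
    then have "Z (Max I) \<le> Z (Min I) + (Max I - Min I) * c + (gcd c n - 1)"
      using stride_lift_add_le[of n c "y + Min I" "Max I - Min I"] unfolding Z_def by simp
    moreover have "(Max I - Min I) * c \<le> (k - 1) * c"
      using \<open>Max I < k\<close> by (intro mult_le_mono1) simp
    moreover have "(k - 1) * c + c = k * c" "0 < gcd c n"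
      using \<open>Max I < k\<close> \<open>0 < n\<close> by (simp_all add: mult_eq_if)
    ultimately show False
      using spread budget \<open>0 < c\<close> mult.commute[of n r] by linarith
  qed
qed

lemma le_sigmaI:
  assumes "s \<le> n" "bij_betw \<pi> {..<n} {..<n}" "clash_free n \<pi> s k r"
  shows "s \<le> sigma n k r"
  unfolding sigma_def using assms by (intro Greatest_le_nat[where b = n]) auto

lemma sigma_attained:
  "sigma n k r \<le> n \<and> (\<exists>\<pi>. bij_betw \<pi> {..<n} {..<n} \<and> clash_free n \<pi> (sigma n k r) k r)"
proof -
  define P where "P s \<longleftrightarrow> s \<le> n \<and> (\<exists>\<pi>. bij_betw \<pi> {..<n} {..<n} \<and> clash_free n \<pi> s k r)" for s
  have "clash_free n id 0 k r"
    unfolding clash_free_def is_clash_def by simp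
  then have "P 0"
    unfolding P_def by auto
  then have "P (Greatest P)"
    by (rule GreatestI_nat[where b = n]) (simp add: P_def)
  then show ?thesis
    unfolding P_def sigma_def by simp
qed

lemma stride_parameter_bounds:
  fixes n k r :: nat
  assumes "0 < r" "r < k" "k < n"
  defines "q \<equiv> (r * n - 1) div k"
  shows "0 < q" "q < n" "k * q + gcd q n \<le> r * n"
proof -
  have kq: "k * q \<le> r * n - 1"
    unfolding q_def by simp
  have "n \<le> r * n"
    using assms(1) by simp
  then have "k \<le> r * n - 1"
    using assms by linarith
  then show "0 < q"
    unfolding q_def using assms by (simp add: div_greater_zero_iff)
  have "r * n < k * n"
    using assms by simp
  then have "k * q < k * n"
    using kq by linarith
  then show "q < n"
    by simp
  have "gcd q n dvd r * n - k * q"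
    by (intro dvd_diff_nat) (simp_all add: dvd_mult)
  moreover have "0 < r * n - k * q"
    using kq \<open>n \<le> r * n\<close> assms by linarith
  ultimately have "gcd q n \<le> r * n - k * q"
    by (rule dvd_imp_le)
  then show "k * q + gcd q n \<le> r * n"
    using kq by linarith
qed

theorem theorem2:
  fixes n k r :: nat
  assumes "1 < r" and "r < k" and "k < n"
  shows "\<lfloor>(real r * real n - 1) / real k\<rfloor> - 1 \<le> int (sigma n k r)
       \<and> int (sigma n k r) \<le> \<lfloor>(real r * real n - 1) / real k\<rfloor>"
proof -
  define q where "q = (r * n - 1) div k"
  have "real r * real n - 1 = real (r * n - 1)"
    using assms by (simp add: of_nat_diff)
  then have floor_eq: "\<lfloor>(real r * real n - 1) / real k\<rfloor> = int q"
    unfolding q_def by (simp only: floor_divide_of_nat_eq)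
  obtain \<pi> where "bij_betw \<pi> {..<n} {..<n}" "clash_free n \<pi> (sigma n k r) k r"
    using sigma_attained by blast
  then have "sigma n k r * k < r * n"
    using clash_free_upper_bound sigma_attained assms by simp
  then have upper: "sigma n k r \<le> q"
    unfolding q_def using assms by (simp add: less_eq_div_iff_mult_less_eq)
  have "0 < q" "q < n" and budget: "k * q + gcd q n \<le> r * n"
    using stride_parameter_bounds[of r k n] assms unfolding q_def by simp_all
  then have "q - 1 \<le> sigma n k r"
    using le_sigmaI[OF _ bij_betw_the_inv_into[OF bij_betw_stride_perm]
        clash_free_the_inv_into[OF bij_betw_stride_perm clash_free_stride_perm[OF \<open>0 < q\<close> budget]]]
    by simp
  with upper show ?thesis
    unfolding floor_eq by linarith
qed

end
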